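(* Consider the adaptive sieving procedure described in the context. For each $i\in\{1,\dots,N\}$, the inner loop for $C_i$ terminates after finitely many iterations: there exists an integer $\bar{k}$ with $0\le\bar{k}\le n$ such that $\mathcal{J}^{\bar{k}}(C_i)=\emptyset$. Moreover, the output tuple $(\overline{W}(C_i),\overline{b}(C_i),\overline{v}(C_i),\overline{U}(C_i),\overline{\lambda}(C_i),\overline{\Lambda}(C_i))$ is a KKT tuple of the perturbed full problem $$\min_{W,b,v,U}\ \tfrac12\|W\|_F^2+\tau\|U\|_*+\delta^*_{S^i}(v)-\langle\delta_W,W\rangle-b\delta_b-\langle\delta_v,v\rangle-\langle\delta_U,U\rangle\quad\text{s.t.}\quad \mathcal{A}W+by+v-e_n=\delta_\lambda,\ W-U=\delta_\Lambda$$ for some error $(\delta_W,\delta_b,\delta_v,\delta_U,\delta_\lambda,\delta_\Lambda)$ with $\max(\|\delta_W\|,|\delta_b|,\|\delta_v\|,\|\delta_U\|,\|\delta_\lambda\|,\|\delta_\Lambda\|)\le\varepsilon$; that is, $\delta_W=\overline{W}+\mathcal{A}^*\overline{\lambda}+\overline{\Lambda}$, $\delta_b=y^\top\overline{\lambda}$, $\delta_v-\overline{\lambda}\in\partial\delta^*_{S^i}(\overline{v})$, $\delta_U+\overline{\Lambda}\in\partial(\tau\|\cdot\|_* )(\overline{U})$, $\delta_\lambda=\mathcal{A}\overline{W}+\overline{b}y+\overline{v}-e_n$, $\delta_\Lambda=\overline{W}-\overline{U}$ (all barred quantities evaluated at $C_i$).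
   Context: Data: $X_1,\dots,X_n\in\mathbb{R}^{p\times q}$, $y=(y_1,\dots,y_n)^\top\in\{-1,+1\}^n$, $\tau>0$, $e_n$ the all-ones vector, $\|\cdot\|_*$ the nuclear norm, $\langle X,Y\rangle=\operatorname{tr}(X^\top Y)$. $\mathcal{A}W=(\langle y_1X_1,W\rangle,\dots,\langle y_nX_n,W\rangle)^\top$, $\mathcal{A}^*z=\sum_j z_jy_jX_j$; for $\mathcal{I}\subseteq[n]:=\{1,\dots,n\}$, $\mathcal{A}_{\mathcal{I}}W:=(\mathcal{A}W)_{\mathcal{I}}$, $\mathcal{A}^*_{\mathcal{I}}z:=\sum_{j\in\mathcal{I}}z_jy_jX_j$, and $y_{\mathcal{I}},(e_n)_{\mathcal{I}}$ are subvectors. For grid values $0<C_0<C_1<\dots<C_N$, let $S^i=[0,C_i]^n$, $S^i_{\mathcal{I}}=[0,C_i]^{|\mathcal{I}|}$, and $\delta^*_K$ the support function of $K$. Reduced perturbed problem for $\mathcal{I}$ and $C_i$: minimize $\frac12\|W\|_F^2+\tau\|U\|_*+\delta^*_{S^i_{\mathcal{I}}}(v_{\mathcal{I}})-\langle\delta_W,W\rangle-b\delta_b-\langle\delta_{v_\mathcal{I}},v_{\mathcal{I}}\rangle-\langle\delta_U,U\rangle$ subject to $\mathcal{A}_{\mathcal{I}}W+by_{\mathcal{I}}+v_{\mathcal{I}}-(e_n)_{\mathcal{I}}=\delta_{\lambda_\mathcal{I}}$, $W-U=\delta_\Lambda$. A tuple $(W,b,v_{\mathcal{I}},U,\lambda_{\mathcal{I}},\Lambda)$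 is a KKT tuple of it if $\delta_W=W+\mathcal{A}^*_{\mathcal{I}}\lambda_{\mathcal{I}}+\Lambda$, $\delta_b=y_{\mathcal{I}}^\top\lambda_{\mathcal{I}}$, $\delta_{v_\mathcal{I}}-\lambda_{\mathcal{I}}\in\partial\delta^*_{S^i_{\mathcal{I}}}(v_{\mathcal{I}})$, $\delta_U+\Lambda\in\partial(\tau\|\cdot\|_* )(U)$, $\delta_{\lambda_\mathcal{I}}=\mathcal{A}_{\mathcal{I}}W+by_{\mathcal{I}}+v_{\mathcal{I}}-(e_n)_{\mathcal{I}}$, $\delta_\Lambda=W-U$. Procedure (AS strategy): given an initial $(\overline{W}(C_0),\overline{b}(C_0))$, a tolerance $\varepsilon\ge0$, a scalar $\widehat{\varepsilon}\ge0$ and a positive integer $d_{\max}$, set $\mathcal{I}^*(C_0)=\{j: y_j(\langle\overline{W}(C_0),X_j\rangle+\overline{b}(C_0))\le1+\widehat{\varepsilon}\}$. For $i=1,\dots,N$, set $\mathcal{I}^0(C_i)=\mathcal{I}^*(C_{i-1})$, $k=0$, and repeat: Step 1: find a KKT tuple $(W^k,b^k,v^k_{\mathcal{I}},U^k,\lambda^k_{\mathcal{I}},\Lambda^k)$ of the reduced perturbed problem with $\mathcal{I}=\mathcal{I}^k(C_i)$ for some errors all of norm at most $\varepsilon$. Step 2: with $\overline{\mathcal{I}}^k=[n]\setminus\mathcal{I}^k(C_i)$, set $v^k_j=1-y_j(\langle W^k,X_j\rangle+b^k)$ for $j\in\overline{\mathcal{I}}^k$ and $\mathcal{J}^k(C_i)=\{j\in\overline{\mathcal{I}}^k: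 v^k_j\ge0\}$; extend $v^k_{\mathcal{I}}$ to $v^k\in\mathbb{R}^n$ by these values, and $\lambda^k_{\mathcal{I}}$ to $\lambda^k\in\mathbb{R}^n$ by $\lambda^k_j=-C_i$ for $j\in\mathcal{J}^k(C_i)$ and $\lambda^k_j=0$ for other $j\in\overline{\mathcal{I}}^k$. Step 3: if $\mathcal{J}^k(C_i)=\emptyset$, output $(\overline{W}(C_i),\overline{b}(C_i),\overline{v}(C_i),\overline{U}(C_i),\overline{\lambda}(C_i),\overline{\Lambda}(C_i))=(W^k,b^k,v^k,U^k,\lambda^k,\Lambda^k)$, set $\mathcal{I}^*(C_i)=\{j: y_j(\langle\overline{W}(C_i),X_j\rangle+\overline{b}(C_i))\le1+\widehat{\varepsilon}\}$ and move to $i+1$; otherwise choose a positive integer $d\le\min\{|\mathcal{J}^k(C_i)|,d_{\max}\}$, let $\widehat{\mathcal{J}}^{k+1}(C_i)$ be the indices $j\in\mathcal{J}^k(C_i)$ of the $d$ largest values among $\{v^k_t\}_{t\in\mathcal{J}^k(C_i)}$, set $\mathcal{I}^{k+1}(C_i)=\mathcal{I}^k(C_i)\cup\widehat{\mathcal{J}}^{k+1}(C_i)$, $k\leftarrow k+1$, and return to Step 1. *)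

theory Defs
  imports "HOL-Analysis.Analysis"
begin

text \<open>Matrices in R^{p x q} are elements of real^'q^'p. The HOL-Analysis inner product
on this type is sum of entrywise products = tr(X^T Y), and the norm is the Frobenius norm.
Vectors in R^n are real^'n with n = CARD('n); [n] = UNIV.
A reduced vector in R^I is represented by its zero extension, i.e. an element of
the coordinate subspace coord_sub I (isometric copy of R^{|I|}).\<close>

definition spec_norm :: "real^'q^'p \<Rightarrow> real" where
  "spec_norm Y = onorm (\<lambda>x. Y *v x)"

definition nuc_norm :: "real^'q^'p \<Rightarrow> real" where
  "nuc_norm X = Sup {X \<bullet> Y | Y. spec_norm Y \<le> 1}"

definition subdiff_in :: "'a::real_inner set \<Rightarrow> ('a \<Rightarrow> real) \<Rightarrow> 'a \<Rightarrow> 'a set" where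
  "subdiff_in V f x = {g \<in> V. \<forall>z\<in>V. f z \<ge> f x + g \<bullet> (z - x)}"

definition subdiff :: "('a::real_inner \<Rightarrow> real) \<Rightarrow> 'a \<Rightarrow> 'a set" where
  "subdiff f x = subdiff_in UNIV f x"

definition support_fun :: "'a::real_inner set \<Rightarrow> 'a \<Rightarrow> real" where
  "support_fun K v = Sup ((\<lambda>u. u \<bullet> v) ` K)"

definition coord_sub :: "'n::finite set \<Rightarrow> (real^'n) set" where
  "coord_sub I = {v. \<forall>j. j \<notin> I \<longrightarrow> v$j = 0}"

definition restr :: "'n::finite set \<Rightarrow> real^'n \<Rightarrow> real^'n" where
  "restr I v = (\<chi> j. if j \<in> I then v$j else 0)"

text \<open>S^i_I = [0,C]^{|I|}, embedded in coord_sub I; Sbox UNIV C = S^i = [0,C]^n.\<close>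
definition Sbox :: "'n::finite set \<Rightarrow> real \<Rightarrow> (real^'n) set" where
  "Sbox I C = {u. \<forall>j. (j \<in> I \<longrightarrow> 0 \<le> u$j \<and> u$j \<le> C) \<and> (j \<notin> I \<longrightarrow> u$j = 0)}"

definition opA :: "('n::finite \<Rightarrow> real^'q^'p) \<Rightarrow> real^'n \<Rightarrow> 'n set \<Rightarrow> real^'q^'p \<Rightarrow> real^'n" where
  "opA X y I W = (\<chi> j. if j \<in> I then (y$j *\<^sub>R X j) \<bullet> W else 0)"

definition adjA :: "('n::finite \<Rightarrow> real^'q^'p) \<Rightarrow> real^'n \<Rightarrow> 'n set \<Rightarrow> real^'n \<Rightarrow> real^'q^'p" where
  "adjA X y I z = (\<Sum>j\<in>I. (z$j * y$j) *\<^sub>R X j)"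

definition ones :: "real^'n::finite" where
  "ones = (\<chi> j. 1)"

definition red_KKT ::
  "('n::finite \<Rightarrow> real^'q^'p) \<Rightarrow> real^'n \<Rightarrow> real \<Rightarrow> 'n set \<Rightarrow> real \<Rightarrow>
   real^'q^'p \<Rightarrow> real \<Rightarrow> real^'n \<Rightarrow> real^'q^'p \<Rightarrow> real^'n \<Rightarrow> real^'q^'p \<Rightarrow>
   real^'q^'p \<Rightarrow> real \<Rightarrow> real^'n \<Rightarrow> real^'q^'p \<Rightarrow> real^'n \<Rightarrow> real^'q^'p \<Rightarrow> bool" where
  "red_KKT X y tau I C W b v U lam Lam dW db dv dU dlam dLam \<longleftrightarrow>
     v \<in> coord_sub I \<and> lam \<in> coord_sub I \<and> dv \<in> coord_sub I \<and> dlam \<in> coord_sub I \<and>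
     dW = W + adjA X y I lam + Lam \<and>
     db = restr I y \<bullet> lam \<and>
     dv - lam \<in> subdiff_in (coord_sub I) (support_fun (Sbox I C)) v \<and>
     dU + Lam \<in> subdiff (\<lambda>Z. tau * nuc_norm Z) U \<and>
     dlam = opA X y I W + b *\<^sub>R restr I y + v - restr I ones \<and>
     dLam = W - U"

definition full_KKT ::
  "('n::finite \<Rightarrow> real^'q^'p) \<Rightarrow> real^'n \<Rightarrow> real \<Rightarrow> real \<Rightarrow>
   real^'q^'p \<Rightarrow> real \<Rightarrow> real^'n \<Rightarrow> real^'q^'p \<Rightarrow> real^'n \<Rightarrow> real^'q^'p \<Rightarrow>
   real^'q^'p \<Rightarrow> real \<Rightarrow> real^'n \<Rightarrow> real^'q^'p \<Rightarrow> real^'n \<Rightarrow> real^'q^'p \<Rightarrow> bool" where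
  "full_KKT X y tau C W b v U lam Lam dW db dv dU dlam dLam \<longleftrightarrow>
     dW = W + adjA X y UNIV lam + Lam \<and>
     db = y \<bullet> lam \<and>
     dv - lam \<in> subdiff (support_fun (Sbox UNIV C)) v \<and>
     dU + Lam \<in> subdiff (\<lambda>Z. tau * nuc_norm Z) U \<and>
     dlam = opA X y UNIV W + b *\<^sub>R y + v - ones \<and>
     dLam = W - U"

definition err_bound ::
  "real \<Rightarrow> real^'q^'p \<Rightarrow> real \<Rightarrow> real^'n::finite \<Rightarrow> real^'q^'p \<Rightarrow> real^'n \<Rightarrow> real^'q^'p \<Rightarrow> bool" where
  "err_bound eps dW db dv dU dlam dLam \<longleftrightarrow>
     norm dW \<le> eps \<and> \<bar>db\<bar> \<le> eps \<and> norm dv \<le> eps \<and> norm dU \<le> eps \<and>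
     norm dlam \<le> eps \<and> norm dLam \<le> eps"

definition resid :: "('n::finite \<Rightarrow> real^'q^'p) \<Rightarrow> real^'n \<Rightarrow> real^'q^'p \<Rightarrow> real \<Rightarrow> 'n \<Rightarrow> real" where
  "resid X y W b j = 1 - y$j * (W \<bullet> X j + b)"

definition Jset :: "('n::finite \<Rightarrow> real^'q^'p) \<Rightarrow> real^'n \<Rightarrow> 'n set \<Rightarrow> real^'q^'p \<Rightarrow> real \<Rightarrow> 'n set" where
  "Jset X y I W b = {j. j \<notin> I \<and> resid X y W b j \<ge> 0}"

definition Ist :: "('n::finite \<Rightarrow> real^'q^'p) \<Rightarrow> real^'n \<Rightarrow> real \<Rightarrow> real^'q^'p \<Rightarrow> real \<Rightarrow> 'n set" where
  "Ist X y epsh W b = {j. y$j * (W \<bullet> X j + b) \<le> 1 + epsh}"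

definition ext_v :: "('n::finite \<Rightarrow> real^'q^'p) \<Rightarrow> real^'n \<Rightarrow> 'n set \<Rightarrow> real^'q^'p \<Rightarrow> real \<Rightarrow> real^'n \<Rightarrow> real^'n" where
  "ext_v X y I W b v = (\<chi> j. if j \<in> I then v$j else resid X y W b j)"

definition ext_lam :: "('n::finite \<Rightarrow> real^'q^'p) \<Rightarrow> real^'n \<Rightarrow> 'n set \<Rightarrow> real \<Rightarrow> real^'q^'p \<Rightarrow> real \<Rightarrow> real^'n \<Rightarrow> real^'n" where
  "ext_lam X y I C W b lam = (\<chi> j. if j \<in> I then lam$j else if j \<in> Jset X y I W b then - C else 0)"

end

theory Submission
  imports Defs
begin

text \<open>Each pass of the inner loop adds at least one index that is not yet in the working
set, so after at most n passes no constraint outside the working set is violated. Then every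
index outside the working set has a negative residual, and the subdifferential of the support
function of [0, C] at a negative number is {0}; hence extending \<open>v\<close> by the residuals and
\<open>\<lambda>\<close> by zeros turns a KKT tuple of the reduced problem into one of the full problem with
the same errors. Which violated indices are added, and the initial working set, play no role.\<close>

lemma first_empty_le_card:
  fixes A J :: "nat \<Rightarrow> 'a::finite set"
  assumes disjoint: "\<And>k. J k \<inter> A k = {}"
    and grows: "\<And>k. \<forall>k'\<le>k. J k' \<noteq> {} \<Longrightarrow> A k \<subset> A (Suc k)"
  shows "\<exists>m\<le>CARD('a). J m = {} \<and> (\<forall>k<m. J k \<noteq> {})"
proof -
  have card_ge: "k \<le> card (A k)" if "\<forall>k'<k. J k' \<noteq> {}" for k
    using that
  proof (induction k)
    case (Suc k)
    then have "A k \<subset> A (Suc k)" by (intro grows) auto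
    then have "card (A k) < card (A (Suc k))" by (simp add: psubset_card_mono)
    with Suc show ?case by simp
  qed simp
  have "\<exists>m\<le>CARD('a). J m = {}"
  proof (rule ccontr)
    assume "\<not> ?thesis"
    then have "\<forall>k<CARD('a). J k \<noteq> {}" and nonempty: "J CARD('a) \<noteq> {}" by auto
    then have "A CARD('a) = UNIV"
      using card_ge card_seteq[OF finite subset_UNIV] by metis
    with disjoint nonempty show False by blast
  qed
  then obtain m where m: "m \<le> CARD('a)" "J m = {}" by blast
  define m\<^sub>0 where "m\<^sub>0 = (LEAST m. J m = {})"
  have "J m\<^sub>0 = {}" "m\<^sub>0 \<le> m"
    unfolding m\<^sub>0_def by (rule LeastI[of _ m] Least_le; fact m(2))+
  moreover have "\<forall>k<m\<^sub>0. J k \<noteq> {}"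
    unfolding m\<^sub>0_def using not_less_Least by blast
  ultimately show ?thesis using m(1) by (intro exI[of _ m\<^sub>0]) auto
qed

lemma restr_in_coord_sub: "restr I v \<in> coord_sub I"
  by (simp add: restr_def coord_sub_def)

lemma inner_coord_sub: "u \<in> coord_sub I \<Longrightarrow> u \<bullet> v = (\<Sum>j\<in>I. u$j * v$j)"
  unfolding inner_vec_def coord_sub_def inner_real_def
  by (rule sum.mono_neutral_right) auto

lemma Sbox_mono: "I \<subseteq> I' \<Longrightarrow> 0 \<le> C \<Longrightarrow> Sbox I C \<subseteq> Sbox I' C"
  unfolding Sbox_def by (smt (verit) mem_Collect_eq subset_iff)

lemma bdd_above_inner_Sbox: "bdd_above ((\<lambda>u. u \<bullet> z) ` Sbox I C)"
proof (rule bdd_aboveI2)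
  fix u assume u: "u \<in> Sbox I C"
  have "u \<bullet> z = (\<Sum>j\<in>UNIV. u$j * z$j)" by (simp add: inner_vec_def)
  also have "\<dots> \<le> (\<Sum>j\<in>UNIV. \<bar>C\<bar> * \<bar>z$j\<bar>)"
  proof (rule sum_mono)
    fix j
    have "\<bar>u$j\<bar> \<le> \<bar>C\<bar>" using u unfolding Sbox_def by (cases "j \<in> I") auto
    then have "\<bar>u$j\<bar> * \<bar>z$j\<bar> \<le> \<bar>C\<bar> * \<bar>z$j\<bar>" by (simp add: mult_right_mono)
    then show "u$j * z$j \<le> \<bar>C\<bar> * \<bar>z$j\<bar>" by (metis abs_ge_self abs_mult order_trans)
  qed
  finally show "u \<bullet> z \<le> (\<Sum>j\<in>UNIV. \<bar>C\<bar> * \<bar>z$j\<bar>)" .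
qed

lemma support_fun_Sbox_restr_le:
  assumes "0 \<le> C"
  shows "support_fun (Sbox I C) (restr I z) \<le> support_fun (Sbox UNIV C) z"
  unfolding support_fun_def
proof (rule cSUP_least)
  show "Sbox I C \<noteq> {}" using assms by (auto simp: Sbox_def intro!: exI[of _ 0])
  fix u assume u: "u \<in> Sbox I C"
  then have "u \<in> coord_sub I" by (simp add: Sbox_def coord_sub_def)
  then have "u \<bullet> restr I z = u \<bullet> z" by (simp add: inner_coord_sub restr_def)
  also have "\<dots> \<le> (SUP u\<in>Sbox UNIV C. u \<bullet> z)"
    by (intro cSUP_upper bdd_above_inner_Sbox) (use u Sbox_mono[OF subset_UNIV assms] in blast)
  finally show "u \<bullet> restr I z \<le> (SUP u\<in>Sbox UNIV C. u \<bullet> z)" .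
qed

lemma support_fun_Sbox_UNIV_le:
  fixes w v :: "real^'n::finite"
  assumes "0 \<le> C" and agree: "\<forall>j\<in>I. w$j = v$j" and nonpos: "\<forall>j. j \<notin> I \<longrightarrow> w$j \<le> 0"
  shows "support_fun (Sbox UNIV C) w \<le> support_fun (Sbox I C) v"
  unfolding support_fun_def
proof (rule cSUP_least)
  show "Sbox (UNIV :: 'n set) C \<noteq> {}" using assms by (auto simp: Sbox_def intro!: exI[of _ 0])
  fix u :: "real^'n" assume u: "u \<in> Sbox UNIV C"
  then have u_nonneg: "0 \<le> u$j" for j by (simp add: Sbox_def)
  have "restr I u \<in> Sbox I C" using u by (simp add: Sbox_def restr_def)
  have "u \<bullet> w \<le> restr I u \<bullet> v"
    unfolding inner_vec_def
  proof (rule sum_mono)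
    fix j
    show "u$j \<bullet> w$j \<le> restr I u $ j \<bullet> v$j"
      using agree nonpos u_nonneg[of j] by (cases "j \<in> I") (auto simp: restr_def mult_nonneg_nonpos)
  qed
  also have "\<dots> \<le> (SUP u\<in>Sbox I C. u \<bullet> v)"
    using \<open>restr I u \<in> Sbox I C\<close> by (auto intro: cSUP_upper bdd_above_inner_Sbox)
  finally show "u \<bullet> w \<le> (SUP u\<in>Sbox I C. u \<bullet> v)" .
qed

lemma subdiff_support_fun_Sbox_extend:
  assumes g: "g \<in> subdiff_in (coord_sub I) (support_fun (Sbox I C)) v"
    and "0 \<le> C" and agree: "\<forall>j\<in>I. w$j = v$j" and nonpos: "\<forall>j. j \<notin> I \<longrightarrow> w$j \<le> 0"
  shows "g \<in> subdiff (support_fun (Sbox UNIV C)) w"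
  unfolding subdiff_def subdiff_in_def
proof (intro CollectI conjI ballI UNIV_I)
  fix z
  have g_sub: "g \<in> coord_sub I"
    and g_ineq: "support_fun (Sbox I C) (restr I z) \<ge> support_fun (Sbox I C) v + g \<bullet> (restr I z - v)"
    using g restr_in_coord_sub unfolding subdiff_in_def by blast+
  have "g \<bullet> (restr I z - v) = g \<bullet> (z - w)"
    using g_sub agree by (simp add: inner_coord_sub restr_def)
  then show "support_fun (Sbox UNIV C) z \<ge> support_fun (Sbox UNIV C) w + g \<bullet> (z - w)"
    using g_ineq support_fun_Sbox_restr_le[OF \<open>0 \<le> C\<close>, of I z]
      support_fun_Sbox_UNIV_le[OF \<open>0 \<le> C\<close> agree nonpos] by linarith
qed

lemma ext_lam_eq:
  "lam \<in> coord_sub I \<Longrightarrow> Jset X y I W b = {} \<Longrightarrow> ext_lam X y I C W b lam = lam"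
  by (auto simp: vec_eq_iff ext_lam_def coord_sub_def)

lemma adjA_UNIV_coord_sub: "lam \<in> coord_sub I \<Longrightarrow> adjA X y UNIV lam = adjA X y I lam"
  unfolding adjA_def coord_sub_def by (rule sum.mono_neutral_right) auto

lemma inner_restr_coord_sub:
  assumes "lam \<in> coord_sub I"
  shows "restr I y \<bullet> lam = y \<bullet> lam"
proof -
  have "restr I y \<bullet> lam = (\<Sum>j\<in>I. lam$j * y$j)"
    unfolding inner_coord_sub[OF restr_in_coord_sub] by (simp add: restr_def mult.commute)
  also have "\<dots> = y \<bullet> lam"
    by (simp add: inner_coord_sub[OF assms] inner_commute[of y])
  finally show ?thesis .
qed

lemma constraint_residual_ext_v:
  assumes "v \<in> coord_sub I"
  shows "opA X y UNIV W + b *\<^sub>R y + ext_v X y I W b v - ones =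
    opA X y I W + b *\<^sub>R restr I y + v - restr I ones"
  using assms
  by (auto simp: vec_eq_iff opA_def ext_v_def restr_def ones_def resid_def coord_sub_def
      inner_commute algebra_simps)

lemma full_KKT_of_red_KKT:
  assumes red: "red_KKT X y tau I C W b v U lam Lam dW db dv dU dlam dLam"
    and no_violation: "Jset X y I W b = {}" and "0 \<le> C"
  shows "full_KKT X y tau C W b (ext_v X y I W b v) U (ext_lam X y I C W b lam) Lam
    dW db dv dU dlam dLam"
proof -
  have v: "v \<in> coord_sub I" and lam: "lam \<in> coord_sub I"
    and subgrad: "dv - lam \<in> subdiff_in (coord_sub I) (support_fun (Sbox I C)) v"
    using red unfolding red_KKT_def by blast+
  have resid_neg: "\<forall>j. j \<notin> I \<longrightarrow> ext_v X y I W b v $ j \<le> 0"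
    using no_violation by (auto simp: Jset_def ext_v_def)
  have "dv - lam \<in> subdiff (support_fun (Sbox UNIV C)) (ext_v X y I W b v)"
    by (rule subdiff_support_fun_Sbox_extend[OF subgrad \<open>0 \<le> C\<close> _ resid_neg])
      (simp add: ext_v_def)
  with red show ?thesis
    unfolding full_KKT_def red_KKT_def ext_lam_eq[OF lam no_violation]
    by (simp add: adjA_UNIV_coord_sub[OF lam] inner_restr_coord_sub[OF lam]
        constraint_residual_ext_v[OF v])
qed

lemma inner_loop_terminates_in_full_KKT:
  fixes X :: "'n::finite \<Rightarrow> real^'q::finite^'p::finite"
    and I :: "nat \<Rightarrow> 'n set" and W U Lam :: "nat \<Rightarrow> real^'q^'p" and b :: "nat \<Rightarrow> real"
    and v lam :: "nat \<Rightarrow> real^'n"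
  assumes "0 \<le> C"
    and solve: "\<And>k. \<forall>k'<k. Jset X y (I k') (W k') (b k') \<noteq> {} \<Longrightarrow>
      \<exists>dW db dv dU dlam dLam. err_bound eps dW db dv dU dlam dLam \<and>
        red_KKT X y tau (I k) C (W k) (b k) (v k) (U k) (lam k) (Lam k) dW db dv dU dlam dLam"
    and enlarge: "\<And>k. \<forall>k'\<le>k. Jset X y (I k') (W k') (b k') \<noteq> {} \<Longrightarrow>
      \<exists>Jh. Jh \<noteq> {} \<and> Jh \<subseteq> Jset X y (I k) (W k) (b k) \<and> I (Suc k) = I k \<union> Jh"
  shows "\<exists>kb\<le>CARD('n). Jset X y (I kb) (W kb) (b kb) = {} \<and>
    (\<forall>k<kb. Jset X y (I k) (W k) (b k) \<noteq> {}) \<and>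
    (\<exists>dW db dv dU dlam dLam. err_bound eps dW db dv dU dlam dLam \<and>
      full_KKT X y tau C (W kb) (b kb) (ext_v X y (I kb) (W kb) (b kb) (v kb)) (U kb)
        (ext_lam X y (I kb) C (W kb) (b kb) (lam kb)) (Lam kb) dW db dv dU dlam dLam)"
proof -
  have "\<exists>kb\<le>CARD('n). Jset X y (I kb) (W kb) (b kb) = {} \<and>
    (\<forall>k<kb. Jset X y (I k) (W k) (b k) \<noteq> {})"
  proof (rule first_empty_le_card[where A = I])
    show "Jset X y (I k) (W k) (b k) \<inter> I k = {}" for k
      unfolding Jset_def by auto
    show "I k \<subset> I (Suc k)" if violated: "\<forall>k'\<le>k. Jset X y (I k') (W k') (b k') \<noteq> {}" for k
    proof -
      obtain Jh where Jh: "Jh \<noteq> {}" "Jh \<subseteq> Jset X y (I k) (W k) (b k)" "I (Suc k) = I k \<union> Jh"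
        using enlarge[OF violated] by blast
      have "Jh \<inter> I k = {}"
        using Jh(2) by (auto simp: Jset_def)
      with Jh(1,3) show ?thesis by blast
    qed
  qed
  then obtain kb where kb: "kb \<le> CARD('n)" "Jset X y (I kb) (W kb) (b kb) = {}"
    "\<forall>k<kb. Jset X y (I k) (W k) (b k) \<noteq> {}"
    by blast
  from solve[OF kb(3)] obtain dW db dv dU dlam dLam
    where err: "err_bound eps dW db dv dU dlam dLam"
      and red: "red_KKT X y tau (I kb) C (W kb) (b kb) (v kb) (U kb) (lam kb) (Lam kb)
        dW db dv dU dlam dLam"
    by blast
  show ?thesis
    by (intro exI[of _ kb] conjI kb)
      (use err full_KKT_of_red_KKT[OF red kb(2) \<open>0 \<le> C\<close>] in blast)
qed

theorem theorem3:
  fixes X :: "'n::finite \<Rightarrow> real^'q::finite^'p::finite" and y :: "real^'n"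
    and tau eps epsh :: real and dmax N :: nat and C :: "nat \<Rightarrow> real"
    and W0 :: "real^'q^'p" and b0 :: real
    and I :: "nat \<Rightarrow> nat \<Rightarrow> 'n set" and Istar :: "nat \<Rightarrow> 'n set"
    and W U Lam :: "nat \<Rightarrow> nat \<Rightarrow> real^'q^'p" and b :: "nat \<Rightarrow> nat \<Rightarrow> real"
    and v lam :: "nat \<Rightarrow> nat \<Rightarrow> real^'n"
  assumes y_pm: "\<forall>j. y$j = 1 \<or> y$j = -1"
    and tau_pos: "tau > 0"
    and C0_pos: "0 < C 0"
    and C_incr: "\<forall>i<N. C i < C (Suc i)"
    and eps_nonneg: "eps \<ge> 0"
    and epsh_nonneg: "epsh \<ge> 0"
    and dmax_pos: "dmax > 0"
    and Istar0: "Istar 0 = Ist X y epsh W0 b0"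
    and init: "\<forall>i\<in>{1..N}. I i 0 = Istar (i - 1)"
    and step1: "\<forall>i\<in>{1..N}. \<forall>k.
        (\<forall>k'<k. Jset X y (I i k') (W i k') (b i k') \<noteq> {}) \<longrightarrow>
        (\<exists>dW db dv dU dlam dLam. err_bound eps dW db dv dU dlam dLam \<and>
           red_KKT X y tau (I i k) (C i) (W i k) (b i k) (v i k) (U i k) (lam i k) (Lam i k)
             dW db dv dU dlam dLam)"
    and step3: "\<forall>i\<in>{1..N}. \<forall>k.
        (\<forall>k'\<le>k. Jset X y (I i k') (W i k') (b i k') \<noteq> {}) \<longrightarrow>
        (\<exists>d Jh. 0 < d \<and> d \<le> card (Jset X y (I i k) (W i k) (b i k)) \<and> d \<le> dmax \<and>
           Jh \<subseteq> Jset X y (I i k) (W i k) (b i k) \<and> card Jh = d \<and>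
           (\<forall>j\<in>Jh. \<forall>t\<in>Jset X y (I i k) (W i k) (b i k) - Jh.
               resid X y (W i k) (b i k) t \<le> resid X y (W i k) (b i k) j) \<and>
           I i (Suc k) = I i k \<union> Jh)"
    and out_def: "\<forall>i\<in>{1..N}. \<forall>k.
        (\<forall>k'<k. Jset X y (I i k') (W i k') (b i k') \<noteq> {}) \<and>
        Jset X y (I i k) (W i k) (b i k) = {} \<longrightarrow>
        Istar i = Ist X y epsh (W i k) (b i k)"
  shows "\<forall>i\<in>{1..N}. \<exists>kb. kb \<le> CARD('n) \<and>
           Jset X y (I i kb) (W i kb) (b i kb) = {} \<and>
           (\<forall>k<kb. Jset X y (I i k) (W i k) (b i k) \<noteq> {}) \<and>
           (\<exists>dW db dv dU dlam dLam. err_bound eps dW db dv dU dlam dLam \<and>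
              full_KKT X y tau (C i) (W i kb) (b i kb)
                (ext_v X y (I i kb) (W i kb) (b i kb) (v i kb)) (U i kb)
                (ext_lam X y (I i kb) (C i) (W i kb) (b i kb) (lam i kb)) (Lam i kb)
                dW db dv dU dlam dLam)"
proof (intro ballI inner_loop_terminates_in_full_KKT)
  fix i assume i: "i \<in> {1..N}"
  have "C 0 \<le> C i"
    by (rule lift_Suc_mono_le_ivl[of "{..<N}"]) (use C_incr i in \<open>auto simp: less_imp_le\<close>)
  with C0_pos show "0 \<le> C i" by linarith
  show "\<exists>dW db dv dU dlam dLam. err_bound eps dW db dv dU dlam dLam \<and>
      red_KKT X y tau (I i k) (C i) (W i k) (b i k) (v i k) (U i k) (lam i k) (Lam i k)
        dW db dv dU dlam dLam"
    if "\<forall>k'<k. Jset X y (I i k') (W i k') (b i k') \<noteq> {}" for k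
    using bspec[OF step1 i, THEN spec[of _ k], THEN mp, OF that] .
  show "\<exists>Jh. Jh \<noteq> {} \<and> Jh \<subseteq> Jset X y (I i k) (W i k) (b i k) \<and> I i (Suc k) = I i k \<union> Jh"
    if "\<forall>k'\<le>k. Jset X y (I i k') (W i k') (b i k') \<noteq> {}" for k
  proof -
    from bspec[OF step3 i, THEN spec[of _ k], THEN mp, OF that] obtain Jh where
      "0 < card Jh" "Jh \<subseteq> Jset X y (I i k) (W i k) (b i k)" "I i (Suc k) = I i k \<union> Jh"
      by blast
    then show ?thesis by (intro exI[of _ Jh]) auto
  qed
qed

end
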